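(* Let $n\ge2$ and let $X$ be a simple directed graph with vertex set $[n]$. Let $p,q\in[n]$ satisfy: - $p\to q\in E(X)$; - $q\to p\notin E(X)$; - $\{p,q\}$ is sink-equivalent in $X$. Then $$\mathrm{ODP}(X,\mathrm{Path}_n)_{p\to q}=x\cdot\mathrm{ODP}(X-q,\mathrm{Path}_{n-1}),$$ where $X-q$ is the induced subgraph of $X$ on $[n]\setminus\{q\}$.
   Context: $\mathrm{Path}_n$ is the directed graph on $[n]$ with edges $i\to i+1$ for $1\le i\le n-1$. For a simple directed graph $X$, a set $S\subseteq V(X)$ is sink-equivalent if for every $t\notin S$, either $s\to t\in E(X)$ for all $s\in S$, or $s\to t\notin E(X)$ for all $s\in S$. For directed graphs $X,Y$ with $|V(X)|=|V(Y)|$, $\mathrm{DFS}(X,Y)$ has as vertices the bijections $\sigma:V(X)\to V(Y)$. For each $\sigma$ and ordered pair $(a,b)$ of distinct vertices, it has $m_X(a,b)m_Y(\sigma(a),\sigma(b))$ edges from $\sigma$ to $\sigma\circ(a\,b)$, where $m_X(a,b)$ is the number of edges $a\to b$ in $X$. Thus $\mathrm{outdeg}(\sigma)=\sum_{a\ne b}m_X(a,b)m_Y(\sigma(a),\sigma(b))$ and $\mathrm{ODP}(X,Y)=\sum_\sigma x^{\mathrm{outdeg}(\sigma)}$. $\mathrm{ODP}(X,Y)_{a\to b}$ is the sum of $x^{\mathrm{outdeg}(\sigma)}$ over bijections $\sigma$ with $\sigma(a)\to\sigma(b)\in E(Y)$. *)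

theory Defs
  imports "HOL-Computational_Algebra.Polynomial" "HOL-Library.FuncSet"
begin

text \<open>A simple directed graph on vertex set V is given by an edge relation E
  (E a b means there is an edge a -> b); simple = no loops, at most one edge
  a -> b, and all edges lie inside V.\<close>
definition simple_digraph :: "'a set \<Rightarrow> ('a \<Rightarrow> 'a \<Rightarrow> bool) \<Rightarrow> bool" where
  "simple_digraph V E \<longleftrightarrow> (\<forall>a b. E a b \<longrightarrow> a \<in> V \<and> b \<in> V \<and> a \<noteq> b)"

definition path_edge :: "nat \<Rightarrow> nat \<Rightarrow> nat \<Rightarrow> bool" where
  "path_edge n i j \<longleftrightarrow> 1 \<le> i \<and> i + 1 \<le> n \<and> j = i + 1"

definition sink_equivalent :: "'a set \<Rightarrow> ('a \<Rightarrow> 'a \<Rightarrow> bool) \<Rightarrow> 'a set \<Rightarrow> bool" where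
  "sink_equivalent V E S \<longleftrightarrow> S \<subseteq> V \<and>
     (\<forall>t \<in> V - S. (\<forall>s \<in> S. E s t) \<or> (\<forall>s \<in> S. \<not> E s t))"

definition induced :: "('a \<Rightarrow> 'a \<Rightarrow> bool) \<Rightarrow> 'a set \<Rightarrow> 'a \<Rightarrow> 'a \<Rightarrow> bool" where
  "induced E S a b \<longleftrightarrow> a \<in> S \<and> b \<in> S \<and> E a b"

definition bijections :: "'a set \<Rightarrow> 'b set \<Rightarrow> ('a \<Rightarrow> 'b) set" where
  "bijections A B = {\<sigma>. bij_betw \<sigma> A B \<and> \<sigma> \<in> extensional A}"

text \<open>Out-degree of sigma in DFS(X,Y) for simple digraphs (multiplicities are 0/1).\<close>
definition outdeg :: "'a set \<Rightarrow> ('a \<Rightarrow> 'a \<Rightarrow> bool) \<Rightarrow> ('b \<Rightarrow> 'b \<Rightarrow> bool) \<Rightarrow> ('a \<Rightarrow> 'b) \<Rightarrow> nat" where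
  "outdeg VX EdX EdY \<sigma> = card {(a, b). a \<in> VX \<and> b \<in> VX \<and> a \<noteq> b \<and> EdX a b \<and> EdY (\<sigma> a) (\<sigma> b)}"

definition ODP :: "'a set \<Rightarrow> ('a \<Rightarrow> 'a \<Rightarrow> bool) \<Rightarrow> 'b set \<Rightarrow> ('b \<Rightarrow> 'b \<Rightarrow> bool) \<Rightarrow> int poly" where
  "ODP VX EdX VY EdY = (\<Sum>\<sigma> \<in> bijections VX VY. monom 1 (outdeg VX EdX EdY \<sigma>))"

definition ODP_edge :: "'a set \<Rightarrow> ('a \<Rightarrow> 'a \<Rightarrow> bool) \<Rightarrow> 'b set \<Rightarrow> ('b \<Rightarrow> 'b \<Rightarrow> bool) \<Rightarrow> 'a \<Rightarrow> 'a \<Rightarrow> int poly" where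
  "ODP_edge VX EdX VY EdY a b =
     (\<Sum>\<sigma> \<in> {\<sigma> \<in> bijections VX VY. EdY (\<sigma> a) (\<sigma> b)}. monom 1 (outdeg VX EdX EdY \<sigma>))"

end

theory Submission imports Defs begin

text \<open>A bijection \<open>\<sigma>\<close> onto \<open>Path n\<close> with \<open>\<sigma>(p) \<rightarrow> \<sigma>(q)\<close> has \<open>\<sigma>(q) = \<sigma>(p) + 1\<close>. Deleting
  \<open>q\<close> and closing the gap in the labels, i.e. lowering every label above \<open>\<sigma>(q)\<close> by one, is a
  bijection onto the labellings of \<open>X - q\<close> by \<open>Path (n - 1)\<close>; its inverse reinserts \<open>q\<close> right
  after \<open>p\<close>. The edge \<open>p \<rightarrow> q\<close> is lost, and every other contributing edge survives: an edge
  \<open>q \<rightarrow> b\<close> with \<open>\<sigma>(b) = \<sigma>(q) + 1\<close> becomes the contributing pair \<open>p \<rightarrow> b\<close>, which is an edge of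
  \<open>X\<close> precisely because \<open>{p, q}\<close> is sink-equivalent. So the out-degree drops by exactly one.\<close>

definition shift_down :: "nat \<Rightarrow> nat \<Rightarrow> nat" where
  "shift_down c k = (if k < c then k else k - 1)"

definition shift_up :: "nat \<Rightarrow> nat \<Rightarrow> nat" where
  "shift_up c k = (if k < c then k else Suc k)"

lemma shift_up_shift_down: "k \<noteq> c \<Longrightarrow> shift_up c (shift_down c k) = k"
  by (auto simp: shift_up_def shift_down_def)

lemma shift_down_shift_up: "shift_down c (shift_up c k) = k"
  by (auto simp: shift_up_def shift_down_def)

lemma bij_betw_shift_down:
  assumes "c \<in> {1..n}"
  shows "bij_betw (shift_down c) ({1..n} - {c}) {1..n-1}"
proof (rule bij_betw_byWitness[where f' = "shift_up c"])
  show "\<forall>k\<in>{1..n} - {c}. shift_up c (shift_down c k) = k"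
    by (simp add: shift_up_shift_down)
  show "\<forall>k\<in>{1..n-1}. shift_down c (shift_up c k) = k"
    by (simp add: shift_down_shift_up)
  show "shift_down c ` ({1..n} - {c}) \<subseteq> {1..n-1}"
    using assms by (auto simp: shift_down_def)
  show "shift_up c ` {1..n-1} \<subseteq> {1..n} - {c}"
    using assms by (auto simp: shift_up_def)
qed

lemma path_edge_shift_down:
  assumes "c \<in> {1..n}" "i \<in> {1..n} - {c}" "j \<in> {1..n} - {c}"
  shows "path_edge (n - 1) (shift_down c i) (shift_down c j) \<longleftrightarrow>
           path_edge n i j \<or> (Suc i = c \<and> j = Suc c)"
  using assms by (auto simp: path_edge_def shift_down_def)

lemma bij_betw_shift_up:
  assumes "c \<in> {1..n}"
  shows "bij_betw (shift_up c) {1..n-1} ({1..n} - {c})"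
proof (rule bij_betw_byWitness[where f' = "shift_down c"])
  show "\<forall>k\<in>{1..n-1}. shift_down c (shift_up c k) = k"
    by (simp add: shift_down_shift_up)
  show "\<forall>k\<in>{1..n} - {c}. shift_up c (shift_down c k) = k"
    by (simp add: shift_up_shift_down)
  show "shift_up c ` {1..n-1} \<subseteq> {1..n} - {c}"
    using assms by (auto simp: shift_up_def)
  show "shift_down c ` ({1..n} - {c}) \<subseteq> {1..n-1}"
    using assms by (auto simp: shift_down_def)
qed

definition delete_vertex :: "'a set \<Rightarrow> 'a \<Rightarrow> ('a \<Rightarrow> nat) \<Rightarrow> 'a \<Rightarrow> nat" where
  "delete_vertex V q \<sigma> = restrict (\<lambda>v. shift_down (\<sigma> q) (\<sigma> v)) (V - {q})"

definition insert_vertex_after :: "'a set \<Rightarrow> 'a \<Rightarrow> 'a \<Rightarrow> ('a \<Rightarrow> nat) \<Rightarrow> 'a \<Rightarrow> nat" where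
  "insert_vertex_after V p q \<tau> =
     restrict (\<lambda>v. if v = q then Suc (\<tau> p) else shift_up (Suc (\<tau> p)) (\<tau> v)) V"

lemma delete_vertex_bijection:
  assumes \<sigma>: "\<sigma> \<in> bijections V {1..n}" and q: "q \<in> V"
  shows "delete_vertex V q \<sigma> \<in> bijections (V - {q}) {1..n-1}"
proof -
  have bij: "bij_betw \<sigma> V {1..n}" using \<sigma> by (simp add: bijections_def)
  then have \<sigma>q: "\<sigma> q \<in> {1..n}" using q by (auto simp: bij_betw_def)
  have "bij_betw \<sigma> (V - {q}) ({1..n} - {\<sigma> q})"
    using bij q \<sigma>q by (intro bij_betw_DiffI) auto
  from bij_betw_trans[OF this bij_betw_shift_down[OF \<sigma>q]]
  have "bij_betw (\<lambda>v. shift_down (\<sigma> q) (\<sigma> v)) (V - {q}) {1..n-1}"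
    by (simp add: comp_def)
  then have "bij_betw (delete_vertex V q \<sigma>) (V - {q}) {1..n-1}"
    by (rule bij_betw_cong[THEN iffD1, rotated]) (simp add: delete_vertex_def)
  then show ?thesis by (simp add: bijections_def delete_vertex_def)
qed

lemma insert_vertex_after_bijection:
  assumes \<tau>: "\<tau> \<in> bijections (V - {q}) {1..n-1}" and p: "p \<in> V - {q}" and q: "q \<in> V"
  shows "insert_vertex_after V p q \<tau> \<in> bijections V {1..n}"
proof -
  define c where "c = Suc (\<tau> p)"
  have bij: "bij_betw \<tau> (V - {q}) {1..n-1}" using \<tau> by (simp add: bijections_def)
  then have "\<tau> p \<in> {1..n-1}" using p by (auto simp: bij_betw_def)
  then have c: "c \<in> {1..n}" by (auto simp: c_def)
  from bij_betw_trans[OF bij bij_betw_shift_up[OF c]]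
  have "bij_betw (\<lambda>v. shift_up c (\<tau> v)) (V - {q}) ({1..n} - {c})"
    by (simp add: comp_def)
  then have "bij_betw (insert_vertex_after V p q \<tau>) (V - {q}) ({1..n} - {c})"
    by (rule bij_betw_cong[THEN iffD1, rotated]) (simp add: insert_vertex_after_def c_def)
  moreover have "bij_betw (insert_vertex_after V p q \<tau>) {q} {c}"
    using q by (simp add: insert_vertex_after_def c_def)
  ultimately have "bij_betw (insert_vertex_after V p q \<tau>) ((V - {q}) \<union> {q}) (({1..n} - {c}) \<union> {c})"
    by (rule bij_betw_combine) simp
  moreover have "(V - {q}) \<union> {q} = V" "({1..n} - {c}) \<union> {c} = {1..n}"
    using q c by auto
  ultimately show ?thesis by (simp add: bijections_def insert_vertex_after_def)
qed

lemma delete_insert_vertex: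
  assumes \<tau>: "\<tau> \<in> extensional (V - {q})" and p: "p \<in> V - {q}" and q: "q \<in> V"
  shows "delete_vertex V q (insert_vertex_after V p q \<tau>) = \<tau>"
proof -
  define \<sigma> where "\<sigma> = insert_vertex_after V p q \<tau>"
  have \<sigma>q: "\<sigma> q = Suc (\<tau> p)" using q by (simp add: \<sigma>_def insert_vertex_after_def)
  have "delete_vertex V q \<sigma> v = \<tau> v" for v
  proof (cases "v \<in> V - {q}")
    case True
    then have "\<sigma> v = shift_up (Suc (\<tau> p)) (\<tau> v)" by (simp add: \<sigma>_def insert_vertex_after_def)
    then show ?thesis using True \<sigma>q by (simp add: delete_vertex_def shift_down_shift_up)
  next
    case False
    then show ?thesis using extensional_arb[OF \<tau> False] by (auto simp: delete_vertex_def)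
  qed
  then show ?thesis by (simp add: \<sigma>_def fun_eq_iff)
qed

lemma insert_delete_vertex:
  assumes \<sigma>: "\<sigma> \<in> extensional V" and inj: "inj_on \<sigma> V"
    and p: "p \<in> V" and q: "q \<in> V" and \<sigma>pq: "\<sigma> q = Suc (\<sigma> p)"
  shows "insert_vertex_after V p q (delete_vertex V q \<sigma>) = \<sigma>"
proof -
  define \<tau> where "\<tau> = delete_vertex V q \<sigma>"
  have "p \<noteq> q" using \<sigma>pq by auto
  then have \<tau>p: "\<tau> p = \<sigma> p" using p \<sigma>pq by (simp add: \<tau>_def delete_vertex_def shift_down_def)
  have "insert_vertex_after V p q \<tau> v = \<sigma> v" for v
  proof -
    consider "v = q" | "v \<in> V - {q}" | "v \<notin> V" by blast
    then show ?thesis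
    proof cases
      case 1
      then show ?thesis using q \<tau>p \<sigma>pq by (simp add: insert_vertex_after_def)
    next
      case 2
      then have "\<tau> v = shift_down (\<sigma> q) (\<sigma> v)" by (simp add: \<tau>_def delete_vertex_def)
      moreover have "\<sigma> v \<noteq> \<sigma> q" using 2 q inj by (auto simp: inj_on_eq_iff)
      ultimately show ?thesis
        using 2 \<tau>p \<sigma>pq[symmetric] by (simp add: insert_vertex_after_def shift_up_shift_down)
    next
      case 3
      then show ?thesis using extensional_arb[OF \<sigma> 3] by (simp add: insert_vertex_after_def)
    qed
  qed
  then show ?thesis by (simp add: \<tau>_def fun_eq_iff)
qed

lemma insert_vertex_after_consecutive:
  assumes "p \<in> V - {q}" "q \<in> V"
  shows "insert_vertex_after V p q \<tau> q = Suc (insert_vertex_after V p q \<tau> p)"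
  using assms by (simp add: insert_vertex_after_def shift_up_def)

lemma bij_betw_delete_vertex:
  assumes p: "p \<in> V" and q: "q \<in> V" and pq: "p \<noteq> q"
  shows "bij_betw (delete_vertex V q)
           {\<sigma> \<in> bijections V {1..n}. \<sigma> q = Suc (\<sigma> p)} (bijections (V - {q}) {1..n-1})"
    (is "bij_betw _ ?A ?B")
proof (rule bij_betw_byWitness[where f' = "insert_vertex_after V p q"])
  have p': "p \<in> V - {q}" using p pq by simp
  show "\<forall>\<sigma>\<in>?A. insert_vertex_after V p q (delete_vertex V q \<sigma>) = \<sigma>"
  proof
    fix \<sigma> assume "\<sigma> \<in> ?A"
    then have "\<sigma> \<in> extensional V" "inj_on \<sigma> V" "\<sigma> q = Suc (\<sigma> p)"
      by (simp_all add: bijections_def bij_betw_def)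
    then show "insert_vertex_after V p q (delete_vertex V q \<sigma>) = \<sigma>"
      by (rule insert_delete_vertex[OF _ _ p q])
  qed
  show "\<forall>\<tau>\<in>?B. delete_vertex V q (insert_vertex_after V p q \<tau>) = \<tau>"
  proof
    fix \<tau> assume "\<tau> \<in> ?B"
    then have "\<tau> \<in> extensional (V - {q})" by (simp add: bijections_def)
    then show "delete_vertex V q (insert_vertex_after V p q \<tau>) = \<tau>"
      by (rule delete_insert_vertex[OF _ p' q])
  qed
  show "delete_vertex V q ` ?A \<subseteq> ?B"
  proof (rule image_subsetI)
    fix \<sigma> assume "\<sigma> \<in> ?A"
    then have "\<sigma> \<in> bijections V {1..n}" by simp
    then show "delete_vertex V q \<sigma> \<in> ?B" by (rule delete_vertex_bijection[OF _ q])
  qed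
  show "insert_vertex_after V p q ` ?B \<subseteq> ?A"
  proof (rule image_subsetI)
    fix \<tau> assume "\<tau> \<in> ?B"
    then show "insert_vertex_after V p q \<tau> \<in> ?A"
      using insert_vertex_after_bijection[OF _ p' q] insert_vertex_after_consecutive[OF p' q] by simp
  qed
qed

lemma path_edge_bijection_iff:
  assumes "\<sigma> \<in> bijections V {1..n}" "p \<in> V" "q \<in> V"
  shows "path_edge n (\<sigma> p) (\<sigma> q) \<longleftrightarrow> \<sigma> q = Suc (\<sigma> p)"
proof -
  have "\<sigma> p \<in> {1..n}" "\<sigma> q \<in> {1..n}"
    using assms by (auto simp: bijections_def bij_betw_def)
  then show ?thesis by (auto simp: path_edge_def)
qed

definition out_edges :: "'a set \<Rightarrow> ('a \<Rightarrow> 'a \<Rightarrow> bool) \<Rightarrow> ('b \<Rightarrow> 'b \<Rightarrow> bool) \<Rightarrow> ('a \<Rightarrow> 'b) \<Rightarrow> ('a \<times> 'a) set" where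
  "out_edges VX EdX EdY \<sigma> = {(a, b). a \<in> VX \<and> b \<in> VX \<and> a \<noteq> b \<and> EdX a b \<and> EdY (\<sigma> a) (\<sigma> b)}"

lemma outdeg_eq_card_out_edges: "outdeg VX EdX EdY \<sigma> = card (out_edges VX EdX EdY \<sigma>)"
  by (simp add: outdeg_def out_edges_def)

lemma path_edge_delete_vertex:
  assumes \<sigma>: "\<sigma> \<in> bijections V {1..n}" and p: "p \<in> V" and q: "q \<in> V" and \<sigma>pq: "\<sigma> q = Suc (\<sigma> p)"
    and a: "a \<in> V - {q}" and b: "b \<in> V - {q}"
  shows "path_edge (n - 1) (delete_vertex V q \<sigma> a) (delete_vertex V q \<sigma> b) \<longleftrightarrow>
           path_edge n (\<sigma> a) (\<sigma> b) \<or> a = p \<and> path_edge n (\<sigma> q) (\<sigma> b)"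
proof -
  have inj: "inj_on \<sigma> V" and \<sigma>V: "\<sigma> ` V = {1..n}"
    using \<sigma> by (auto simp: bijections_def bij_betw_def)
  have \<sigma>_other: "\<sigma> v \<in> {1..n} - {\<sigma> q}" if "v \<in> V - {q}" for v
    using that q \<sigma>V by (auto simp: inj_on_eq_iff[OF inj])
  have "\<sigma> q \<in> {1..n}" using q \<sigma>V by blast
  note shift = path_edge_shift_down[OF this \<sigma>_other[OF a] \<sigma>_other[OF b]]
  have "Suc (\<sigma> a) = \<sigma> q \<longleftrightarrow> a = p"
    using a p \<sigma>pq by (auto simp: inj_on_eq_iff[OF inj])
  moreover have "\<sigma> b = Suc (\<sigma> q) \<longleftrightarrow> path_edge n (\<sigma> q) (\<sigma> b)"
    using \<sigma>_other[OF b] \<sigma>pq by (auto simp: path_edge_def)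
  ultimately show ?thesis
    using shift a b by (simp add: delete_vertex_def)
qed

lemma out_edges_delete_vertex:
  fixes \<sigma> :: "'a \<Rightarrow> nat"
  assumes X: "simple_digraph V E" and \<sigma>: "\<sigma> \<in> bijections V {1..n}"
    and p: "p \<in> V" and q: "q \<in> V" and "p \<noteq> q" and \<sigma>pq: "\<sigma> q = Suc (\<sigma> p)"
    and twins: "\<And>b. b \<in> V - {p, q} \<Longrightarrow> E p b = E q b"
  shows "(\<lambda>(a, b). (if a = q then p else a, b)) ` (out_edges V E (path_edge n) \<sigma> - {(p, q)})
           = out_edges (V - {q}) (induced E (V - {q})) (path_edge (n - 1)) (delete_vertex V q \<sigma>)"
    (is "?g ` (?P - _) = ?P'")
proof -
  have inj: "inj_on \<sigma> V" using \<sigma> by (simp add: bijections_def bij_betw_def)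
  have edge_in_V: "E a b \<Longrightarrow> a \<in> V \<and> b \<in> V \<and> a \<noteq> b" for a b
    using X by (simp add: simple_digraph_def)
  have P_iff: "(a, b) \<in> ?P \<longleftrightarrow> E a b \<and> path_edge n (\<sigma> a) (\<sigma> b)" for a b
    using edge_in_V[of a b] by (auto simp: out_edges_def)
  have P'_iff: "(a, b) \<in> ?P' \<longleftrightarrow> a \<in> V - {q} \<and> b \<in> V - {q} \<and> E a b \<and>
                  (path_edge n (\<sigma> a) (\<sigma> b) \<or> a = p \<and> path_edge n (\<sigma> q) (\<sigma> b))" for a b
  proof (cases "a \<in> V - {q} \<and> b \<in> V - {q}")
    case True
    then show ?thesis
      using path_edge_delete_vertex[OF \<sigma> p q \<sigma>pq, of a b] edge_in_V[of a b]
      by (auto simp: out_edges_def induced_def)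
  qed (auto simp: out_edges_def induced_def)
  have from_p_iff_to_q: "a = p \<longleftrightarrow> b = q" if "(a, b) \<in> ?P" for a b
  proof -
    have "a \<in> V" "b \<in> V" "\<sigma> b = Suc (\<sigma> a)"
      using that edge_in_V[of a b] by (auto simp: P_iff path_edge_def)
    then show ?thesis
      using p q \<sigma>pq by (metis Suc_inject inj inj_on_eq_iff)
  qed
  show ?thesis
  proof (intro equalityI subsetI)
    fix x assume "x \<in> ?g ` (?P - {(p, q)})"
    then obtain y where y: "y \<in> ?P - {(p, q)}" and "x = ?g y" by (rule imageE)
    obtain a b where "y = (a, b)" by (cases y)
    with y \<open>x = ?g y\<close> have ab: "(a, b) \<in> ?P" "(a, b) \<noteq> (p, q)" and x: "x = ?g (a, b)"
      by simp_all
    then have "a \<noteq> p" "b \<noteq> q" using from_p_iff_to_q by auto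
    have "E a b" and \<sigma>ab: "path_edge n (\<sigma> a) (\<sigma> b)" using ab(1) by (simp_all add: P_iff)
    then have "a \<in> V" "b \<in> V" "a \<noteq> b" using edge_in_V by blast+
    show "x \<in> ?P'"
    proof (cases "a = q")
      case True
      have "\<sigma> b \<noteq> \<sigma> p" using \<sigma>ab True \<sigma>pq by (simp add: path_edge_def)
      then have "b \<in> V - {p, q}" using \<open>b \<noteq> q\<close> \<open>b \<in> V\<close> by blast
      then have "E p b" using twins[of b] True \<open>E a b\<close> by simp
      then have "(p, b) \<in> ?P'"
        unfolding P'_iff using True \<sigma>ab p \<open>p \<noteq> q\<close> \<open>b \<in> V - {p, q}\<close> by simp
      then show ?thesis using True x by simp
    next
      case False
      have "(a, b) \<in> ?P'"
        unfolding P'_iff using False \<open>a \<in> V\<close> \<open>b \<in> V\<close> \<open>b \<noteq> q\<close> \<open>E a b\<close> \<sigma>ab by simp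
      then show ?thesis using False x by simp
    qed
  next
    fix x assume "x \<in> ?P'"
    obtain a b where x: "x = (a, b)" by (cases x)
    with \<open>x \<in> ?P'\<close> have ab: "(a, b) \<in> ?P'" by simp
    then have "a \<in> V - {q}" "b \<in> V - {q}" "E a b" unfolding P'_iff by simp_all
    show "x \<in> ?g ` (?P - {(p, q)})"
    proof (cases "a = p \<and> path_edge n (\<sigma> q) (\<sigma> b)")
      case True
      then have "b \<noteq> p" using \<open>E a b\<close> edge_in_V by blast
      then have "(q, b) \<in> ?P - {(p, q)}"
        using True \<open>b \<in> V - {q}\<close> \<open>E a b\<close> twins[of b] \<open>p \<noteq> q\<close> by (simp add: P_iff)
      moreover have "x = ?g (q, b)" using True x by simp
      ultimately show ?thesis by (rule rev_image_eqI)
    next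
      case False
      with ab have "path_edge n (\<sigma> a) (\<sigma> b)" unfolding P'_iff by simp
      then have "(a, b) \<in> ?P - {(p, q)}"
        using \<open>E a b\<close> \<open>b \<in> V - {q}\<close> by (simp add: P_iff)
      moreover have "x = ?g (a, b)" using \<open>a \<in> V - {q}\<close> x by simp
      ultimately show ?thesis by (rule rev_image_eqI)
    qed
  qed
qed

lemma outdeg_delete_vertex:
  fixes \<sigma> :: "'a \<Rightarrow> nat"
  assumes X: "simple_digraph V E" and \<sigma>: "\<sigma> \<in> bijections V {1..n}"
    and p: "p \<in> V" and q: "q \<in> V" and pq: "E p q" and \<sigma>pq: "\<sigma> q = Suc (\<sigma> p)"
    and twins: "\<And>b. b \<in> V - {p, q} \<Longrightarrow> E p b = E q b"
  shows "outdeg V E (path_edge n) \<sigma>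
           = Suc (outdeg (V - {q}) (induced E (V - {q})) (path_edge (n - 1)) (delete_vertex V q \<sigma>))"
proof -
  define P where "P = out_edges V E (path_edge n) \<sigma>"
  define g :: "'a \<times> 'a \<Rightarrow> 'a \<times> 'a" where "g = (\<lambda>(a, b). (if a = q then p else a, b))"
  have "bij_betw \<sigma> V {1..n}" using \<sigma> by (simp add: bijections_def)
  then have inj: "inj_on \<sigma> V" and "\<sigma> p \<in> {1..n}" "\<sigma> q \<in> {1..n}" "finite V"
    using p q by (auto simp: bij_betw_def bij_betw_finite)
  have "p \<noteq> q" using X pq by (auto simp: simple_digraph_def)
  have "(p, q) \<in> P"
    using p q pq \<sigma>pq \<open>\<sigma> q \<in> {1..n}\<close> \<open>\<sigma> p \<in> {1..n}\<close> \<open>p \<noteq> q\<close> by (auto simp: P_def out_edges_def path_edge_def)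
  moreover have "finite P"
    using \<open>finite V\<close> by (intro finite_subset[of P "V \<times> V"]) (auto simp: P_def out_edges_def)
  moreover have "inj_on g (P - {(p, q)})"
  proof (rule inj_on_subset)
    show "inj_on g {x. fst x \<noteq> p}" by (auto simp: g_def inj_on_def split: if_splits)
    show "P - {(p, q)} \<subseteq> {x. fst x \<noteq> p}"
      using \<sigma>pq[symmetric] q by (auto simp: P_def out_edges_def path_edge_def inj_on_eq_iff[OF inj])
  qed
  ultimately have "card P = Suc (card (g ` (P - {(p, q)})))"
    by (metis card_image card_Suc_Diff1)
  then show ?thesis
    using out_edges_delete_vertex[OF X \<sigma> p q \<open>p \<noteq> q\<close> \<sigma>pq twins]
    by (simp add: outdeg_eq_card_out_edges P_def g_def)
qed

lemma x_mult_ODP: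
  "[:0, 1:] * ODP VX EdX VY EdY = (\<Sum>\<sigma> \<in> bijections VX VY. monom 1 (Suc (outdeg VX EdX EdY \<sigma>)))"
  by (simp add: ODP_def sum_distrib_left monom_Suc)

lemma ODP_edge_path_delete_vertex:
  assumes X: "simple_digraph V E" and p: "p \<in> V" and q: "q \<in> V" and pq: "E p q"
    and twins: "\<And>b. b \<in> V - {p, q} \<Longrightarrow> E p b = E q b"
  shows "ODP_edge V E {1..n} (path_edge n) p q
           = [:0, 1:] * ODP (V - {q}) (induced E (V - {q})) {1..n-1} (path_edge (n - 1))"
proof -
  define A where "A = {\<sigma> \<in> bijections V {1..n}. \<sigma> q = Suc (\<sigma> p)}"
  have "p \<noteq> q" using X pq by (auto simp: simple_digraph_def)
  have outdeg_A: "outdeg V E (path_edge n) \<sigma>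
      = Suc (outdeg (V - {q}) (induced E (V - {q})) (path_edge (n - 1)) (delete_vertex V q \<sigma>))"
    if "\<sigma> \<in> A" for \<sigma>
  proof -
    from that have "\<sigma> \<in> bijections V {1..n}" "\<sigma> q = Suc (\<sigma> p)" by (simp_all add: A_def)
    then show ?thesis by (rule outdeg_delete_vertex[OF X _ p q pq _ twins])
  qed
  have "{\<sigma> \<in> bijections V {1..n}. path_edge n (\<sigma> p) (\<sigma> q)} = A"
    unfolding A_def using path_edge_bijection_iff[OF _ p q] by blast
  then have "ODP_edge V E {1..n} (path_edge n) p q = (\<Sum>\<sigma>\<in>A. monom 1 (outdeg V E (path_edge n) \<sigma>))"
    by (simp add: ODP_edge_def)
  also have "\<dots> = (\<Sum>\<sigma>\<in>A. monom 1 (Suc (outdeg (V - {q}) (induced E (V - {q}))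
                                          (path_edge (n - 1)) (delete_vertex V q \<sigma>))))"
    by (rule sum.cong[OF refl]) (simp only: outdeg_A)
  also have "\<dots> = [:0, 1:] * ODP (V - {q}) (induced E (V - {q})) {1..n-1} (path_edge (n - 1))"
    unfolding x_mult_ODP A_def
    using sum.reindex_bij_betw[OF bij_betw_delete_vertex[OF p q \<open>p \<noteq> q\<close>]] .
  finally show ?thesis .
qed

theorem mainTheorem11:
  fixes n p q :: nat and E :: "nat \<Rightarrow> nat \<Rightarrow> bool"
  assumes "n \<ge> 2"
    and "simple_digraph {1..n} E"
    and "p \<in> {1..n}" and "q \<in> {1..n}"
    and "E p q" and "\<not> E q p"
    and "sink_equivalent {1..n} E {p, q}"
  shows "ODP_edge {1..n} E {1..n} (path_edge n) p q
         = [:0, 1:] * ODP ({1..n} - {q}) (induced E ({1..n} - {q})) {1..n-1} (path_edge (n - 1))"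
proof -
  have "\<And>b. b \<in> {1..n} - {p, q} \<Longrightarrow> E p b = E q b"
    using assms(7) by (auto simp: sink_equivalent_def)
  then show ?thesis by (rule ODP_edge_path_delete_vertex[OF assms(2-5)])
qed

end
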